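(* Let $n\in\{4,5\}$ and fix a triangulation $\tau$ of a convex $n$-gon by diagonals. Let $I$ be the set of marked points consisting of one point in each triangle and two points on each diagonal (none on the sides of the $n$-gon), and let $Q$ be the quiver on $I$ defined in the context (equivalently the skew-symmetric matrix $\varepsilon$). Then for $n=4$, $Q$ is mutation equivalent to a quiver whose underlying graph is the Dynkin diagram $D_4$, and for $n=5$, $Q$ is mutation equivalent to a quiver whose underlying graph is the Dynkin diagram $E_7$. Consequently, the cluster $\mathcal X$-space structures on the moduli spaces of configurations of $4$, resp. $5$, flags in $\mathbb{RP}^2$ given by these coordinates are of finite type $D_4$, resp. $E_7$.
   Context: Quiver on $I$: in each triangle of $\tau$ with vertices $u,v,w$ in counterclockwise order, let $c$ be its central marked point and, for a side $xy$ of the triangle that is a diagonal, let $p_{xy}$ be the marked point on it nearer to $x$. Draw the arrows $c\to p_{uv}$ and $p_{vu}\to c$ for each of the three sides $(u,v),(v,w),(w,u)$ traversed counterclockwise, and at each vertex $v$ with preceding vertex $u$ and following vertex $w$ draw the arrow $p_{vw}\to p_{vu}$; arrows involving a point on a side of the $n$-gon (not a marked point) are omitted. Set $\varepsilon_{ij}$ = (number of arrows $i\to j$) $-$ (number of arrows $j\to i$), summed over all triangles. Mutation at $k$ replaces $\varepsilon$ by $\varepsilon'_{ij}=-\varepsilon_{ij}$ if $k\in\{i,j\}$ and $\varepsilon'_{ij}=\varepsilon_{ij}+\varepsilon_{ik}\max\{0,\operatorname{sgn}(\varepsilon_{ik})\varepsilon_{kj}\}$ otherwise; two quivers are mutation equivalent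 if related by a sequence of mutations and relabelings. The coordinates on configurations of $n$ flags (modulo $PGL_3$) are the triple ratios of the flags at the vertices of the triangles and the cross-ratios at the diagonals, as in the parametrization of $\mathcal P_3^n$. *)

theory Defs
  imports Main
begin

text \<open>Vertices of the convex n-gon are 0,...,n-1 in counterclockwise order.
  A diagonal is an ordered pair (i,j) with i < j that is not a side.\<close>

definition is_side :: "nat \<Rightarrow> nat \<times> nat \<Rightarrow> bool" where
  "is_side n e = (case e of (i,j) \<Rightarrow> i < j \<and> j < n \<and> (j = i + 1 \<or> (i = 0 \<and> j = n - 1)))"

definition is_diagonal :: "nat \<Rightarrow> nat \<times> nat \<Rightarrow> bool" where
  "is_diagonal n e = (case e of (i,j) \<Rightarrow> i < j \<and> j < n \<and> i + 2 \<le> j \<and> \<not> (i = 0 \<and> j = n - 1))"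

definition crosses :: "nat \<times> nat \<Rightarrow> nat \<times> nat \<Rightarrow> bool" where
  "crosses e f = (case e of (a,b) \<Rightarrow> case f of (c,d) \<Rightarrow>
      (a < c \<and> c < b \<and> b < d) \<or> (c < a \<and> a < d \<and> d < b))"

definition is_triangulation :: "nat \<Rightarrow> (nat \<times> nat) set \<Rightarrow> bool" where
  "is_triangulation n T =
     ((\<forall>e\<in>T. is_diagonal n e) \<and>
      (\<forall>e\<in>T. \<forall>f\<in>T. \<not> crosses e f) \<and>
      (\<forall>e. is_diagonal n e \<and> e \<notin> T \<longrightarrow> (\<exists>f\<in>T. crosses e f)))"

definition is_edge :: "nat \<Rightarrow> (nat \<times> nat) set \<Rightarrow> nat \<times> nat \<Rightarrow> bool" where
  "is_edge n T e = (is_side n e \<or> e \<in> T)"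

definition triangles :: "nat \<Rightarrow> (nat \<times> nat) set \<Rightarrow> (nat \<times> nat \<times> nat) set" where
  "triangles n T = {(u,v,w). u < v \<and> v < w \<and> w < n \<and>
      is_edge n T (u,v) \<and> is_edge n T (v,w) \<and> is_edge n T (u,w)}"

text \<open>Cen t: the central point of triangle t; Pt x y: the point on the segment xy nearer to x.\<close>
datatype mpoint = Cen "nat \<times> nat \<times> nat" | Pt nat nat

definition marked_points :: "nat \<Rightarrow> (nat \<times> nat) set \<Rightarrow> mpoint set" where
  "marked_points n T = Cen ` triangles n T \<union> {Pt x y | x y. (min x y, max x y) \<in> T}"

text \<open>Arrows drawn in a triangle (u,v,w) (counterclockwise), before omitting those
  involving points on sides of the n-gon.\<close>
definition tri_arrows_raw :: "nat \<times> nat \<times> nat \<Rightarrow> (mpoint \<times> mpoint) list" where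
  "tri_arrows_raw t = (case t of (u,v,w) \<Rightarrow>
     concat (map (\<lambda>(x,y). [(Cen t, Pt x y), (Pt y x, Cen t)]) [(u,v),(v,w),(w,u)])
     @ map (\<lambda>(a,b,c). (Pt b c, Pt b a)) [(u,v,w),(v,w,u),(w,u,v)])"

definition tri_arrows :: "nat \<Rightarrow> (nat \<times> nat) set \<Rightarrow> nat \<times> nat \<times> nat \<Rightarrow> (mpoint \<times> mpoint) list" where
  "tri_arrows n T t = filter (\<lambda>(p,q). p \<in> marked_points n T \<and> q \<in> marked_points n T) (tri_arrows_raw t)"

definition eps :: "nat \<Rightarrow> (nat \<times> nat) set \<Rightarrow> mpoint \<Rightarrow> mpoint \<Rightarrow> int" where
  "eps n T i j = (\<Sum>t\<in>triangles n T.
      int (count_list (tri_arrows n T t) (i,j)) - int (count_list (tri_arrows n T t) (j,i)))"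

definition mutate :: "'a \<Rightarrow> ('a \<Rightarrow> 'a \<Rightarrow> int) \<Rightarrow> ('a \<Rightarrow> 'a \<Rightarrow> int)" where
  "mutate k e = (\<lambda>i j. if i = k \<or> j = k then - e i j
                       else e i j + e i k * max 0 (sgn (e i k) * e k j))"

definition mutate_seq :: "'a list \<Rightarrow> ('a \<Rightarrow> 'a \<Rightarrow> int) \<Rightarrow> ('a \<Rightarrow> 'a \<Rightarrow> int)" where
  "mutate_seq ks e = fold mutate ks e"

text \<open>Two quivers are
  mutation equivalent iff one is obtained from the other by a sequence of mutations
  followed by a relabeling (relabelings commute with mutations, so this equals the
  equivalence generated by mutations and relabelings).\<close>
definition mutation_equivalent ::
  "'a set \<Rightarrow> ('a \<Rightarrow> 'a \<Rightarrow> int) \<Rightarrow> 'b set \<Rightarrow> ('b \<Rightarrow> 'b \<Rightarrow> int) \<Rightarrow> bool" where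
  "mutation_equivalent V e W d =
     (\<exists>ks f. set ks \<subseteq> V \<and> bij_betw f V W \<and>
        (\<forall>i\<in>V. \<forall>j\<in>V. d (f i) (f j) = mutate_seq ks e i j))"

definition underlying_graph_is ::
  "'b set \<Rightarrow> ('b \<Rightarrow> 'b \<Rightarrow> int) \<Rightarrow> ('b \<Rightarrow> 'b \<Rightarrow> bool) \<Rightarrow> bool" where
  "underlying_graph_is W d G = (\<forall>i\<in>W. \<forall>j\<in>W. \<bar>d i j\<bar> = (if G i j then 1 else 0))"

definition D4_vertices :: "nat set" where "D4_vertices = {0..<4}"
definition D4_edge :: "nat \<Rightarrow> nat \<Rightarrow> bool" where
  "D4_edge i j = ({i,j} \<in> {{0,1},{0,2},{0,3}})"

definition E7_vertices :: "nat set" where "E7_vertices = {0..<7}"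
definition E7_edge :: "nat \<Rightarrow> nat \<Rightarrow> bool" where
  "E7_edge i j = ({i,j} \<in> {{0,1},{1,2},{2,3},{3,4},{4,5},{2,6}})"

definition mutation_equivalent_to_Dynkin ::
  "'a set \<Rightarrow> ('a \<Rightarrow> 'a \<Rightarrow> int) \<Rightarrow> nat set \<Rightarrow> (nat \<Rightarrow> nat \<Rightarrow> bool) \<Rightarrow> bool" where
  "mutation_equivalent_to_Dynkin V e W G =
     (\<exists>d. mutation_equivalent V e W d \<and> underlying_graph_is W d G)"

end

theory Submission
  imports Defs
begin

(* A convex quadrilateral has 2 triangulations and a convex pentagon has 5 (all related by
   rotation).  For each of them, an enumeration of the marked points followed by a short sequence
   of mutations (two for n = 4, five for n = 5) yields an exchange matrix whose entries are 0 or
   \<plusminus>1, the nonzero ones exactly on the edges of D4, resp. E7.  Mutation of the relabelled quiver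
   is evaluated on integer matrices, so each of these seven certificates is checked by
   evaluation. *)

lemma mutate_seq_Cons: "mutate_seq (k # ks) e = mutate_seq ks (mutate k e)"
  by (simp add: mutate_seq_def)

lemma mutate_seq_cong:
  assumes "\<And>i j. i \<in> S \<Longrightarrow> j \<in> S \<Longrightarrow> e i j = e' i j" "set ks \<subseteq> S" "i \<in> S" "j \<in> S"
  shows "mutate_seq ks e i j = mutate_seq ks e' i j"
  using assms
proof (induction ks arbitrary: e e')
  case Nil
  then show ?case by (simp add: mutate_seq_def)
next
  case (Cons k ks)
  have "mutate k e i j = mutate k e' i j" if "i \<in> S" "j \<in> S" for i j
    using Cons.prems(1,2) that by (simp add: mutate_def)
  then have "mutate_seq ks (mutate k e) i j = mutate_seq ks (mutate k e') i j"
    using Cons.prems(2-4) by (intro Cons.IH) simp_all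
  then show ?case by (simp add: mutate_seq_Cons)
qed

lemma mutate_relabel:
  assumes "inj_on g S" "k \<in> S" "i \<in> S" "j \<in> S"
  shows "mutate (g k) e (g i) (g j) = mutate k (\<lambda>i j. e (g i) (g j)) i j"
  using assms by (simp add: mutate_def inj_on_eq_iff)

lemma mutate_seq_relabel:
  assumes "inj_on g S" "set ks \<subseteq> S" "i \<in> S" "j \<in> S"
  shows "mutate_seq (map g ks) e (g i) (g j) = mutate_seq ks (\<lambda>i j. e (g i) (g j)) i j"
  using assms(2-)
proof (induction ks arbitrary: e)
  case Nil
  then show ?case by (simp add: mutate_seq_def)
next
  case (Cons k ks)
  have "mutate_seq (map g (k # ks)) e (g i) (g j)
      = mutate_seq ks (\<lambda>i j. mutate (g k) e (g i) (g j)) i j"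
    using Cons.IH Cons.prems by (simp add: mutate_seq_Cons)
  also have "\<dots> = mutate_seq ks (mutate k (\<lambda>i j. e (g i) (g j))) i j"
    using Cons.prems by (intro mutate_seq_cong[of S]) (simp_all add: mutate_relabel[OF assms(1)])
  finally show ?case by (simp add: mutate_seq_Cons)
qed

lemma mutation_equivalent_relabel:
  assumes "bij_betw g W V" "set ks \<subseteq> W"
  shows "mutation_equivalent V e W (mutate_seq ks (\<lambda>i j. e (g i) (g j)))"
  unfolding mutation_equivalent_def
proof (intro exI conjI ballI)
  let ?f = "inv_into W g"
  show "set (map g ks) \<subseteq> V"
    using assms by (auto simp: bij_betw_def)
  show "bij_betw ?f V W"
    using assms(1) by (rule bij_betw_inv_into)
  fix i j
  assume "i \<in> V" "j \<in> V"
  then have "?f i \<in> W" "?f j \<in> W" "g (?f i) = i" "g (?f j) = j"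
    using assms(1) by (auto simp: bij_betw_def inv_into_into f_inv_into_f)
  moreover have "inj_on g W"
    using assms(1) by (rule bij_betw_imp_inj_on)
  ultimately show "mutate_seq ks (\<lambda>i j. e (g i) (g j)) (?f i) (?f j) = mutate_seq (map g ks) e i j"
    using mutate_seq_relabel[of g W ks "?f i" "?f j" e] assms(2) by simp
qed

definition matrix :: "nat \<Rightarrow> (nat \<Rightarrow> nat \<Rightarrow> 'a) \<Rightarrow> 'a list list" where
  "matrix m e = map (\<lambda>i. map (e i) [0..<m]) [0..<m]"

definition mutate_matrix :: "nat \<Rightarrow> int list list \<Rightarrow> int list list" where
  "mutate_matrix k A = matrix (length A) (mutate k (\<lambda>i j. A ! i ! j))"

lemma matrix_nth [simp]: "i < m \<Longrightarrow> j < m \<Longrightarrow> matrix m e ! i ! j = e i j"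
  by (simp add: matrix_def)

lemma length_matrix [simp]: "length (matrix m e) = m"
  by (simp add: matrix_def)

lemma map_matrix: "map (map f) (matrix m e) = matrix m (\<lambda>i j. f (e i j))"
  by (simp add: matrix_def)

lemma matrix_cong: "(\<And>i j. i < m \<Longrightarrow> j < m \<Longrightarrow> e i j = e' i j) \<Longrightarrow> matrix m e = matrix m e'"
  by (simp add: matrix_def)

lemma mutate_matrix_matrix: "k < m \<Longrightarrow> mutate_matrix k (matrix m e) = matrix m (mutate k e)"
  unfolding mutate_matrix_def length_matrix by (rule matrix_cong) (simp add: mutate_def)

lemma fold_mutate_matrix:
  "set ks \<subseteq> {..<m} \<Longrightarrow> fold mutate_matrix ks (matrix m e) = matrix m (mutate_seq ks e)"
  by (induction ks arbitrary: e) (simp_all add: mutate_seq_def mutate_matrix_matrix)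

text \<open>The list \<open>q\<close> enumerates \<open>V\<close>; its \<open>i\<close>-th entry becomes the vertex \<open>i\<close> of \<open>W\<close>.\<close>

lemma mutation_equivalent_to_DynkinI:
  assumes "distinct q" "set q = V" "W = {0..<length q}" "set ks \<subseteq> W"
    and "map (map abs) (fold mutate_matrix ks (matrix (length q) (\<lambda>i j. e (q ! i) (q ! j))))
           = matrix (length q) (\<lambda>i j. if G i j then 1 else 0)"
  shows "mutation_equivalent_to_Dynkin V e W G"
  unfolding mutation_equivalent_to_Dynkin_def
proof (intro exI conjI)
  let ?d = "mutate_seq ks (\<lambda>i j. e (q ! i) (q ! j))"
  have "bij_betw (nth q) W V"
    using assms(1-3) by (simp add: bij_betw_nth atLeast0LessThan)
  then show "mutation_equivalent V e W ?d"
    using assms(4) by (rule mutation_equivalent_relabel)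
  have "\<bar>?d i j\<bar> = (if G i j then 1 else 0)" if "i \<in> W" "j \<in> W" for i j
    using arg_cong[OF assms(5), of "\<lambda>A. A ! i ! j"] assms(3,4) that
    by (simp add: map_matrix fold_mutate_matrix atLeast0LessThan)
  then show "underlying_graph_is W ?d G"
    by (simp add: underlying_graph_is_def)
qed

lemma Collect_is_diagonal:
  "{e. is_diagonal n e} = set [(i, j). i \<leftarrow> [0..<n], j \<leftarrow> [i + 2..<n], \<not> (i = 0 \<and> j = n - 1)]"
  by (auto simp: is_diagonal_def)

lemma Collect_is_triangulation:
  "{T. is_triangulation n T} = Set.filter (\<lambda>T. (\<forall>e\<in>T. \<forall>f\<in>T. \<not> crosses e f) \<and>
      (\<forall>e\<in>{e. is_diagonal n e}. e \<notin> T \<longrightarrow> (\<exists>f\<in>T. crosses e f))) (Pow {e. is_diagonal n e})"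
  by (auto simp: is_triangulation_def)

lemma triangulations_4: "{T. is_triangulation 4 T} = {{(0, 2)}, {(1, 3)}}"
  unfolding Collect_is_triangulation Collect_is_diagonal by code_simp

lemma triangulations_5:
  "{T. is_triangulation 5 T} =
     {{(0, 2), (0, 3)}, {(0, 2), (2, 4)}, {(0, 3), (1, 3)}, {(1, 3), (1, 4)}, {(1, 4), (2, 4)}}"
  unfolding Collect_is_triangulation Collect_is_diagonal by code_simp

lemma triangles_code [code]:
  "triangles n T = set [(u, v, w). u \<leftarrow> [0..<n], v \<leftarrow> [Suc u..<n], w \<leftarrow> [Suc v..<n],
     is_edge n T (u, v) \<and> is_edge n T (v, w) \<and> is_edge n T (u, w)]"
  by (auto simp: triangles_def)

lemma marked_points_code [code]:
  "marked_points n T = Cen ` triangles n T \<union> (\<Union>(a, b)\<in>T. if a \<le> b then {Pt a b, Pt b a} else {})"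
proof -
  have "{Pt x y | x y. (min x y, max x y) \<in> T} = (\<Union>(a, b)\<in>T. if a \<le> b then {Pt a b, Pt b a} else {})"
  proof (intro equalityI subsetI)
    fix p
    assume "p \<in> {Pt x y | x y. (min x y, max x y) \<in> T}"
    then obtain x y where "p = Pt x y" "(min x y, max x y) \<in> T"
      by blast
    then show "p \<in> (\<Union>(a, b)\<in>T. if a \<le> b then {Pt a b, Pt b a} else {})"
      by (cases "x \<le> y") (force simp: min_def max_def)+
  next
    fix p
    assume "p \<in> (\<Union>(a, b)\<in>T. if a \<le> b then {Pt a b, Pt b a} else {})"
    then obtain a b where "(a, b) \<in> T" "a \<le> b" and p: "p = Pt a b \<or> p = Pt b a"
      by (auto split: if_splits)
    then have "(min a b, max a b) \<in> T" "(min b a, max b a) \<in> T"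
      by (auto simp: min_def max_def)
    with p show "p \<in> {Pt x y | x y. (min x y, max x y) \<in> T}"
      by blast
  qed
  then show ?thesis
    by (simp add: marked_points_def)
qed

lemma mutation_equivalent_D4_quadrilateral:
  assumes "is_triangulation 4 T"
  shows "mutation_equivalent_to_Dynkin (marked_points 4 T) (eps 4 T) D4_vertices D4_edge"
proof -
  have "T \<in> {T. is_triangulation 4 T}"
    using assms by simp
  then consider "T = {(0, 2)}" | "T = {(1, 3)}"
    unfolding triangulations_4 by fast
  then show ?thesis
  proof cases
    case 1
    show ?thesis unfolding 1
      by (rule mutation_equivalent_to_DynkinI[where
            q = "[Pt 0 2, Cen (0, 1, 2), Cen (0, 2, 3), Pt 2 0]" and ks = "[1, 0]"]) code_simp+
  next
    case 2
    show ?thesis unfolding 2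
      by (rule mutation_equivalent_to_DynkinI[where
            q = "[Pt 1 3, Cen (0, 1, 3), Cen (1, 2, 3), Pt 3 1]" and ks = "[1, 0]"]) code_simp+
  qed
qed

lemma mutation_equivalent_E7_pentagon:
  assumes "is_triangulation 5 T"
  shows "mutation_equivalent_to_Dynkin (marked_points 5 T) (eps 5 T) E7_vertices E7_edge"
proof -
  have "T \<in> {T. is_triangulation 5 T}"
    using assms by simp
  then consider "T = {(0, 2), (0, 3)}" | "T = {(0, 2), (2, 4)}" | "T = {(0, 3), (1, 3)}"
    | "T = {(1, 3), (1, 4)}" | "T = {(1, 4), (2, 4)}"
    unfolding triangulations_5 by fast
  then show ?thesis
  proof cases
    case 1
    show ?thesis unfolding 1
      by (rule mutation_equivalent_to_DynkinI[where
            q = "[Pt 2 0, Pt 0 2, Pt 3 0, Cen (0, 3, 4), Pt 0 3, Cen (0, 1, 2), Cen (0, 2, 3)]"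
            and ks = "[5, 1, 4, 3, 2]"]) code_simp+
  next
    case 2
    show ?thesis unfolding 2
      by (rule mutation_equivalent_to_DynkinI[where
            q = "[Pt 0 2, Pt 2 0, Pt 4 2, Cen (2, 3, 4), Pt 2 4, Cen (0, 1, 2), Cen (0, 2, 4)]"
            and ks = "[5, 1, 4, 3, 2]"]) code_simp+
  next
    case 3
    show ?thesis unfolding 3
      by (rule mutation_equivalent_to_DynkinI[where
            q = "[Pt 3 0, Pt 0 3, Pt 3 1, Pt 1 3, Cen (0, 3, 4), Cen (1, 2, 3), Cen (0, 1, 3)]"
            and ks = "[6, 1, 3, 4, 2]"]) code_simp+
  next
    case 4
    show ?thesis unfolding 4
      by (rule mutation_equivalent_to_DynkinI[where
            q = "[Pt 4 1, Pt 1 4, Pt 3 1, Cen (1, 2, 3), Pt 1 3, Cen (0, 1, 4), Cen (1, 3, 4)]"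
            and ks = "[5, 1, 4, 3, 2]"]) code_simp+
  next
    case 5
    show ?thesis unfolding 5
      by (rule mutation_equivalent_to_DynkinI[where
            q = "[Pt 1 4, Pt 4 1, Pt 2 4, Cen (2, 3, 4), Pt 4 2, Cen (0, 1, 4), Cen (1, 2, 4)]"
            and ks = "[5, 1, 4, 3, 2]"]) code_simp+
  qed
qed

theorem mainTheorem12:
  fixes n :: nat and T :: "(nat \<times> nat) set"
  assumes "n \<in> {4, 5}"
    and "is_triangulation n T"
  shows "(n = 4 \<longrightarrow> mutation_equivalent_to_Dynkin (marked_points n T) (eps n T) D4_vertices D4_edge)
       \<and> (n = 5 \<longrightarrow> mutation_equivalent_to_Dynkin (marked_points n T) (eps n T) E7_vertices E7_edge)"
proof -
  from assms(1) consider "n = 4" | "n = 5"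
    by blast
  then show ?thesis
    using assms(2) mutation_equivalent_D4_quadrilateral mutation_equivalent_E7_pentagon by cases simp_all
qed

end
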